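(* Let $X$ be an absolutely continuous nonnegative random variable with finite moment of order $s+1$, where $s\geq 1$ is an integer. Then the variance of the $s$-iterated distribution induced by $X$ is $$\sigma^2_s=\frac{1}{s}\frac{\mathbb{E}X^s}{\mathbb{E}X^{s-1}}\left(\frac{2}{s+1}\frac{\mathbb{E}X^{s+1}}{\mathbb{E}X^s}-\frac{1}{s}\frac{\mathbb{E}X^s}{\mathbb{E}X^{s-1}}\right).$$
   Context: Let $X$ be a nonnegative absolutely continuous random variable with density $f_X$. Set $\overline{T}_{X,0}(x)=f_X(x)$ and $\mu_{X,0}=1$. For each integer $s\geq 1$ define recursively $\overline{T}_{X,s}(x)=\frac{1}{\mu_{X,s-1}}\int_x^\infty \overline{T}_{X,s-1}(t)\,dt$ for $x\geq 0$, and $\mu_{X,s}=\int_0^\infty \overline{T}_{X,s}(t)\,dt$ (assuming these integrals are finite). The function $\overline{T}_{X,s}$ is the tail (survival function) of a distribution on $[0,\infty)$, called the $s$-iterated distribution induced by $X$. *)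

theory Defs
  imports "HOL-Probability.Probability"
begin

text \<open>Iterated tails and their means, defined jointly by primitive recursion on s:
  component 1 is the function T_{X,s}, component 2 is mu_{X,s}.\<close>

primrec iter_data :: "(real \<Rightarrow> real) \<Rightarrow> nat \<Rightarrow> (real \<Rightarrow> real) \<times> real" where
  "iter_data f 0 = (f, 1)"
| "iter_data f (Suc s) =
     (let T = fst (iter_data f s); m = snd (iter_data f s);
          T' = (\<lambda>x. (1 / m) * (LINT t:{x..}|lborel. T t))
      in (T', LINT t:{0..}|lborel. T' t))"

definition iter_tail :: "(real \<Rightarrow> real) \<Rightarrow> nat \<Rightarrow> real \<Rightarrow> real" where
  "iter_tail f s = fst (iter_data f s)"

definition iter_mean :: "(real \<Rightarrow> real) \<Rightarrow> nat \<Rightarrow> real" where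
  "iter_mean f s = snd (iter_data f s)"

end

(*
  Write G_k(x) = E (X - x)_+^k. Integrating (y - t)_+^k over t in [x, oo) gives
  (y - x)_+^(k+1) / (k+1), so by Tonelli the iterated tails are
  T_{X,s}(x) = G_{s-1}(x) / E X^(s-1). If Y has tail T_{X,s}, the layer-cake
  formula E Y^p = int_0^oo p t^(p-1) P(Y > t) dt for p = 1, 2 then gives, again by Tonelli,
  E Y = E X^s / (s E X^(s-1)) and E Y^2 = 2 E X^(s+1) / (s (s+1) E X^(s-1)).
*)
theory Submission
  imports Defs
begin

definition trunc_pow :: "nat \<Rightarrow> real \<Rightarrow> real \<Rightarrow> real" where
  "trunc_pow k t y = (if t \<le> y then (y - t) ^ k else 0)"

lemma trunc_pow_nonneg [simp]: "0 \<le> trunc_pow k t y"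
  by (simp add: trunc_pow_def)

lemma trunc_pow_measurable [measurable]:
  "(\<lambda>(t, y). trunc_pow k t y) \<in> borel_measurable (lborel \<Otimes>\<^sub>M lborel)"
  unfolding trunc_pow_def by measurable

lemma trunc_pow_antimono: "x \<le> x' \<Longrightarrow> trunc_pow k x' y \<le> trunc_pow k x y"
  by (auto simp: trunc_pow_def intro!: power_mono)

lemma nn_integral_trunc_pow_Ici:
  "(\<integral>\<^sup>+ t. ennreal (indicator {x..} t * trunc_pow k t y) \<partial>lborel)
     = ennreal (trunc_pow (Suc k) x y / Suc k)"
proof (cases "x \<le> y")
  case True
  define F where "F t = - ((y - t) ^ Suc k / Suc k)" for t
  have F': "(F has_real_derivative (y - t) ^ k) (at t)" for t
    unfolding F_def by (rule derivative_eq_intros refl | simp del: power_Suc of_nat_Suc)+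
  have "(\<integral>\<^sup>+ t. ennreal (indicator {x..} t * trunc_pow k t y) \<partial>lborel)
      = (\<integral>\<^sup>+ t. ennreal ((y - t) ^ k) * indicator {x..y} t \<partial>lborel)"
    by (intro nn_integral_cong) (auto simp: trunc_pow_def indicator_def)
  also have "\<dots> = ennreal (F y - F x)"
    using True F' by (intro nn_integral_FTC_Icc) auto
  finally show ?thesis
    using True by (simp add: trunc_pow_def F_def)
next
  case False
  then have "(\<lambda>t. ennreal (indicator {x..} t * trunc_pow k t y)) = (\<lambda>_. 0)"
    by (auto simp: trunc_pow_def indicator_def)
  with False show ?thesis
    by (simp add: trunc_pow_def)
qed

lemma nn_integral_mult_trunc_pow:
  "(\<integral>\<^sup>+ t. ennreal (indicator {0..} t * t * trunc_pow k t y) \<partial>lborel)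
     = ennreal (trunc_pow (Suc (Suc k)) 0 y / (Suc k * Suc (Suc k)))"
proof (cases "0 \<le> y")
  case True
  define F where
    "F t = - (t * (y - t) ^ Suc k / Suc k) - (y - t) ^ Suc (Suc k) / (Suc k * Suc (Suc k))" for t
  have F': "(F has_real_derivative t * (y - t) ^ k) (at t)" for t
    unfolding F_def
    apply (rule derivative_eq_intros refl | simp del: power_Suc of_nat_Suc)+
    apply (simp add: field_simps del: of_nat_Suc)
    apply (simp add: algebra_simps)
    done
  have "(\<integral>\<^sup>+ t. ennreal (indicator {0..} t * t * trunc_pow k t y) \<partial>lborel)
      = (\<integral>\<^sup>+ t. ennreal (t * (y - t) ^ k) * indicator {0..y} t \<partial>lborel)"
    by (intro nn_integral_cong) (auto simp: trunc_pow_def indicator_def)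
  also have "\<dots> = ennreal (F y - F 0)"
    using True F' by (intro nn_integral_FTC_Icc) auto
  finally show ?thesis
    using True by (simp add: trunc_pow_def F_def)
next
  case False
  then have "(\<lambda>t. ennreal (indicator {0..} t * t * trunc_pow k t y)) = (\<lambda>_. 0)"
    by (auto simp: trunc_pow_def indicator_def)
  with False show ?thesis
    by (simp add: trunc_pow_def)
qed

definition stop_loss :: "(real \<Rightarrow> real) \<Rightarrow> nat \<Rightarrow> real \<Rightarrow> ennreal" where
  "stop_loss f k x = (\<integral>\<^sup>+ y. ennreal (f y * trunc_pow k x y) \<partial>lborel)"

lemma stop_loss_measurable [measurable]:
  assumes [measurable]: "f \<in> borel_measurable lborel"
  shows "stop_loss f k \<in> borel_measurable lborel"
proof -
  have "(\<lambda>x. \<integral>\<^sup>+ y. ennreal (f y * trunc_pow k x y) \<partial>lborel) \<in> borel_measurable lborel"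
    by measurable
  then show ?thesis
    unfolding stop_loss_def[abs_def] .
qed

lemma stop_loss_antimono:
  assumes "\<And>y. 0 \<le> f y" and "x \<le> x'"
  shows "stop_loss f k x' \<le> stop_loss f k x"
  unfolding stop_loss_def
  using assms by (intro nn_integral_mono ennreal_leI mult_left_mono trunc_pow_antimono)

lemma nn_integral_stop_loss:
  assumes [measurable]: "f \<in> borel_measurable lborel" "q \<in> borel_measurable lborel"
    and "\<And>y. 0 \<le> f y" "\<And>t. 0 \<le> q t"
  shows "(\<integral>\<^sup>+ t. ennreal (q t) * stop_loss f k t \<partial>lborel)
    = (\<integral>\<^sup>+ y. ennreal (f y) * (\<integral>\<^sup>+ t. ennreal (q t * trunc_pow k t y) \<partial>lborel) \<partial>lborel)"
proof -
  have "(\<integral>\<^sup>+ t. ennreal (q t) * stop_loss f k t \<partial>lborel)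
      = (\<integral>\<^sup>+ t. \<integral>\<^sup>+ y. ennreal (f y) * ennreal (q t * trunc_pow k t y) \<partial>lborel \<partial>lborel)"
    unfolding stop_loss_def using assms
    by (simp add: nn_integral_cmult[symmetric] ennreal_mult'[symmetric] mult_ac)
  also have "\<dots> = (\<integral>\<^sup>+ y. \<integral>\<^sup>+ t. ennreal (f y) * ennreal (q t * trunc_pow k t y) \<partial>lborel \<partial>lborel)"
    by (rule lborel_pair.Fubini'[symmetric]) measurable
  also have "\<dots> = (\<integral>\<^sup>+ y. ennreal (f y) * (\<integral>\<^sup>+ t. ennreal (q t * trunc_pow k t y) \<partial>lborel) \<partial>lborel)"
    by (simp add: nn_integral_cmult)
  finally show ?thesis .
qed

lemma nn_integral_stop_loss_Ici:
  assumes [measurable]: "f \<in> borel_measurable lborel" and "\<And>y. 0 \<le> f y"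
  shows "(\<integral>\<^sup>+ t. ennreal (indicator {x..} t) * stop_loss f k t \<partial>lborel)
    = stop_loss f (Suc k) x * ennreal (1 / Suc k)"
proof -
  have "(\<integral>\<^sup>+ t. ennreal (indicator {x..} t) * stop_loss f k t \<partial>lborel)
      = (\<integral>\<^sup>+ y. ennreal (f y * trunc_pow (Suc k) x y) * ennreal (1 / Suc k) \<partial>lborel)"
    using assms
    by (simp add: nn_integral_stop_loss nn_integral_trunc_pow_Ici ennreal_mult'[symmetric])
  also have "\<dots> = stop_loss f (Suc k) x * ennreal (1 / Suc k)"
    unfolding stop_loss_def by (rule nn_integral_multc) measurable
  finally show ?thesis .
qed

lemma nn_integral_mult_stop_loss:
  assumes [measurable]: "f \<in> borel_measurable lborel" and f0: "\<And>y. 0 \<le> f y"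
  shows "(\<integral>\<^sup>+ t. ennreal (indicator {0..} t * t) * stop_loss f k t \<partial>lborel)
    = stop_loss f (Suc (Suc k)) 0 * ennreal (1 / (Suc k * Suc (Suc k)))"
proof -
  have q_meas: "(\<lambda>t::real. indicator {0..} t * t) \<in> borel_measurable lborel"
    by (intro borel_measurable_times borel_measurable_indicator) auto
  have q_nonneg: "0 \<le> indicator {0..} t * t" for t :: real
    by (simp add: indicator_def)
  have "(\<integral>\<^sup>+ t. ennreal (indicator {0..} t * t) * stop_loss f k t \<partial>lborel)
      = (\<integral>\<^sup>+ y. ennreal (f y)
          * ennreal (trunc_pow (Suc (Suc k)) 0 y / (Suc k * Suc (Suc k))) \<partial>lborel)"
    by (simp only: nn_integral_stop_loss[of f, OF assms(1) q_meas f0 q_nonneg]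
        nn_integral_mult_trunc_pow)
  also have "\<dots> = (\<integral>\<^sup>+ y. ennreal (f y * trunc_pow (Suc (Suc k)) 0 y)
      * ennreal (1 / (Suc k * Suc (Suc k))) \<partial>lborel)"
    using f0 by (simp add: ennreal_mult'[symmetric])
  also have "\<dots> = stop_loss f (Suc (Suc k)) 0 * ennreal (1 / (Suc k * Suc (Suc k)))"
    unfolding stop_loss_def by (rule nn_integral_multc) measurable
  finally show ?thesis .
qed

lemma set_integral_Ici_stop_loss:
  assumes [measurable]: "f \<in> borel_measurable lborel" and f0: "\<And>y. 0 \<le> f y"
    and fin: "stop_loss f k x < \<infinity>"
  shows "(LINT t:{x..}|lborel. enn2real (stop_loss f k t))
    = enn2real (stop_loss f (Suc k) x) / Suc k"
proof -
  have "(LINT t:{x..}|lborel. enn2real (stop_loss f k t))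
      = enn2real (\<integral>\<^sup>+ t. ennreal (indicator {x..} t * enn2real (stop_loss f k t)) \<partial>lborel)"
    unfolding set_lebesgue_integral_def by (subst integral_eq_nn_integral) auto
  also have "(\<integral>\<^sup>+ t. ennreal (indicator {x..} t * enn2real (stop_loss f k t)) \<partial>lborel)
      = (\<integral>\<^sup>+ t. ennreal (indicator {x..} t) * stop_loss f k t \<partial>lborel)"
  proof (intro nn_integral_cong)
    fix t
    show "ennreal (indicator {x..} t * enn2real (stop_loss f k t))
        = ennreal (indicator {x..} t) * stop_loss f k t"
    proof (cases "x \<le> t")
      case True
      have "stop_loss f k t \<le> stop_loss f k x"
        using f0 True by (rule stop_loss_antimono)
      then have "stop_loss f k t < \<infinity>"
        using fin by (rule le_less_trans)
      with True show ?thesis by simp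
    qed simp
  qed
  finally show ?thesis
    using assms by (simp add: nn_integral_stop_loss_Ici enn2real_mult)
qed

lemma iter_tail_stop_loss:
  assumes [measurable]: "f \<in> borel_measurable lborel" and f0: "\<And>y. 0 \<le> f y"
    and norm: "stop_loss f 0 0 = 1"
    and pos: "\<And>k. k \<le> j \<Longrightarrow> 0 < stop_loss f k 0"
    and fin: "\<And>k. k \<le> j \<Longrightarrow> stop_loss f k 0 < \<infinity>"
    and "0 \<le> x"
  shows "iter_tail f (Suc j) x = enn2real (stop_loss f j x) / enn2real (stop_loss f j 0)"
  using pos fin \<open>0 \<le> x\<close>
proof (induction j arbitrary: x)
  case 0
  have "iter_tail f (Suc 0) x = (LINT t:{x..}|lborel. f t)"
    by (simp add: iter_tail_def iter_mean_def)
  also have "\<dots> = enn2real (\<integral>\<^sup>+ t. ennreal (indicator {x..} t * f t) \<partial>lborel)"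
    unfolding set_lebesgue_integral_def using f0 by (subst integral_eq_nn_integral) auto
  also have "(\<integral>\<^sup>+ t. ennreal (indicator {x..} t * f t) \<partial>lborel) = stop_loss f 0 x"
    unfolding stop_loss_def by (intro nn_integral_cong) (simp add: trunc_pow_def indicator_def)
  finally show ?case
    by (simp add: norm)
next
  case (Suc j)
  define g where "g k t = enn2real (stop_loss f k t)" for k t
  have g_pos: "0 < g k 0" if "k \<le> Suc j" for k
    using Suc.prems that unfolding g_def by (simp add: enn2real_positive_iff)
  have IH: "iter_tail f (Suc j) t = g j t / g j 0" if "0 \<le> t" for t
    unfolding g_def using Suc that by simp
  have integral: "(LINT t:{x..}|lborel. iter_tail f (Suc j) t) = g (Suc j) x / (Suc j * g j 0)"
    if "0 \<le> x" for x
  proof -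
    have "(LINT t:{x..}|lborel. iter_tail f (Suc j) t) = (LINT t:{x..}|lborel. g j t / g j 0)"
      using that IH by (intro set_lebesgue_integral_cong) auto
    also have "\<dots> = (LINT t:{x..}|lborel. g j t) / g j 0"
      by simp
    also have "\<dots> = g (Suc j) x / (Suc j * g j 0)"
    proof -
      have "stop_loss f j x \<le> stop_loss f j 0"
        using f0 that by (rule stop_loss_antimono)
      then have "stop_loss f j x < \<infinity>"
        using Suc.prems(2)[of j] by (simp add: le_less_trans)
      then show ?thesis
        unfolding g_def by (simp add: set_integral_Ici_stop_loss f0)
    qed
    finally show ?thesis .
  qed
  have mean: "iter_mean f (Suc j) = g (Suc j) 0 / (Suc j * g j 0)"
    using integral[of 0] by (simp add: iter_tail_def iter_mean_def Let_def)
  have "iter_tail f (Suc (Suc j)) x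
      = (1 / iter_mean f (Suc j)) * (LINT t:{x..}|lborel. iter_tail f (Suc j) t)"
    by (simp add: iter_tail_def iter_mean_def Let_def)
  also have "\<dots> = g (Suc j) x / g (Suc j) 0"
    using g_pos[of j] g_pos[of "Suc j"] by (simp add: mean integral Suc.prems(3))
  finally show ?case
    unfolding g_def .
qed

lemma nn_integral_layer_cake:
  fixes N :: "real measure" and q Q :: "real \<Rightarrow> real"
  assumes "sigma_finite_measure N" "sets N = sets borel" and N_nonneg: "AE x in N. 0 \<le> x"
    and [measurable]: "q \<in> borel_measurable borel"
    and q_nonneg: "\<And>t. 0 \<le> t \<Longrightarrow> 0 \<le> q t"
    and Q': "\<And>t. 0 \<le> t \<Longrightarrow> (Q has_real_derivative q t) (at t)"
  shows "(\<integral>\<^sup>+ x. ennreal (Q x - Q 0) \<partial>N)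
    = (\<integral>\<^sup>+ t. ennreal (indicator {0..} t * q t) * emeasure N {t<..} \<partial>lborel)"
proof -
  interpret N: sigma_finite_measure N by fact
  interpret P: pair_sigma_finite lborel N
    by (intro pair_sigma_finite.intro lborel.sigma_finite_measure_axioms
        N.sigma_finite_measure_axioms)
  have [measurable_cong]: "sets N = sets borel" by fact
  have "(\<integral>\<^sup>+ x. ennreal (Q x - Q 0) \<partial>N)
      = (\<integral>\<^sup>+ x. \<integral>\<^sup>+ t. ennreal (indicator {0..} t * q t) * indicator {t<..} x \<partial>lborel \<partial>N)"
  proof (rule nn_integral_cong_AE)
    show "AE x in N. ennreal (Q x - Q 0)
        = (\<integral>\<^sup>+ t. ennreal (indicator {0..} t * q t) * indicator {t<..} x \<partial>lborel)"
      using N_nonneg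
    proof eventually_elim
      case (elim x)
      have "(\<integral>\<^sup>+ t. ennreal (indicator {0..} t * q t) * indicator {t<..} x \<partial>lborel)
          = (\<integral>\<^sup>+ t. ennreal (q t) * indicator {0..x} t \<partial>lborel)"
        using AE_lborel_singleton[of x] by (intro nn_integral_cong_AE) (auto simp: indicator_def)
      also have "\<dots> = ennreal (Q x - Q 0)"
        using elim q_nonneg Q' by (intro nn_integral_FTC_Icc) auto
      finally show ?case ..
    qed
  qed
  also have "\<dots> = (\<integral>\<^sup>+ t. \<integral>\<^sup>+ x. ennreal (indicator {0..} t * q t) * indicator {t<..} x \<partial>N \<partial>lborel)"
    by (rule P.Fubini') (simp add: greaterThan_def)
  also have "\<dots> = (\<integral>\<^sup>+ t. ennreal (indicator {0..} t * q t) * emeasure N {t<..} \<partial>lborel)"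
    by (simp add: nn_integral_cmult_indicator)
  finally show ?thesis .
qed

text \<open>N is the (j+1)-iterated distribution induced by the density f: the index is shifted
  so that j ranges over all natural numbers.\<close>

locale iterated_distribution =
  fixes f :: "real \<Rightarrow> real" and j :: nat and N :: "real measure"
  assumes f_measurable [measurable]: "f \<in> borel_measurable lborel"
    and f_nonneg: "\<And>y. 0 \<le> f y"
    and stop_loss_0_0: "stop_loss f 0 0 = 1"
    and stop_loss_pos: "\<And>k. k \<le> Suc j \<Longrightarrow> 0 < stop_loss f k 0"
    and stop_loss_finite: "\<And>k. k \<le> Suc (Suc j) \<Longrightarrow> stop_loss f k 0 < \<infinity>"
    and prob_space_N: "prob_space N" and sets_N [measurable_cong]: "sets N = sets borel"
    and measure_N_negative: "measure N {..<0} = 0"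
    and measure_N_Ioi: "\<And>x. 0 \<le> x \<Longrightarrow> measure N {x<..} = iter_tail f (Suc j) x"
begin

interpretation N: prob_space N
  by (fact prob_space_N)

definition moment :: "nat \<Rightarrow> real" where
  "moment k = enn2real (stop_loss f k 0)"

lemma moment_nonneg: "0 \<le> moment k"
  by (simp add: moment_def)

lemma moment_pos: "k \<le> Suc j \<Longrightarrow> 0 < moment k"
  using stop_loss_pos stop_loss_finite by (simp add: moment_def enn2real_positive_iff)

lemma stop_loss_0_eq_moment: "k \<le> Suc (Suc j) \<Longrightarrow> stop_loss f k 0 = ennreal (moment k)"
  using stop_loss_finite by (simp add: moment_def)

lemma emeasure_N_Ioi:
  assumes "0 \<le> t"
  shows "emeasure N {t<..} = stop_loss f j t * ennreal (1 / moment j)"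
proof -
  have "stop_loss f j t \<le> stop_loss f j 0"
    using f_nonneg assms by (rule stop_loss_antimono)
  then have "stop_loss f j t < \<infinity>"
    using stop_loss_finite[of j] by (simp add: le_less_trans)
  moreover have "iter_tail f (Suc j) t = enn2real (stop_loss f j t) / moment j"
    unfolding moment_def using stop_loss_pos stop_loss_finite assms
    by (intro iter_tail_stop_loss f_measurable f_nonneg stop_loss_0_0) auto
  ultimately show ?thesis
    using assms moment_pos[of j]
    by (simp add: N.emeasure_eq_measure measure_N_Ioi ennreal_mult divide_inverse)
qed

lemma AE_N_nonneg: "AE x in N. 0 \<le> x"
proof (rule AE_I')
  show "{..<0::real} \<in> null_sets N"
    using measure_N_negative by (intro null_setsI) (auto simp: N.emeasure_eq_measure)
qed auto

lemma nn_integral_N_id: "(\<integral>\<^sup>+ x. ennreal x \<partial>N) = ennreal (moment (Suc j) / (Suc j * moment j))"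
proof -
  have "(\<integral>\<^sup>+ x. ennreal x \<partial>N) = (\<integral>\<^sup>+ x. ennreal (x - 0) \<partial>N)"
    by simp
  also have "\<dots> = (\<integral>\<^sup>+ t. ennreal (indicator {0..} t * 1) * emeasure N {t<..} \<partial>lborel)"
    using N.sigma_finite_measure_axioms sets_N AE_N_nonneg
    by (rule nn_integral_layer_cake) (auto intro!: derivative_eq_intros)
  also have "\<dots>
      = (\<integral>\<^sup>+ t. ennreal (indicator {0..} t) * stop_loss f j t * ennreal (1 / moment j) \<partial>lborel)"
    by (intro nn_integral_cong) (simp add: emeasure_N_Ioi indicator_def mult.assoc)
  also have "\<dots> = stop_loss f (Suc j) 0 * ennreal (1 / Suc j) * ennreal (1 / moment j)"
    by (simp add: nn_integral_multc nn_integral_stop_loss_Ici f_nonneg)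
  also have "\<dots> = ennreal (moment (Suc j) / (Suc j * moment j))"
    using moment_pos[of j]
    by (simp add: stop_loss_0_eq_moment moment_nonneg ennreal_mult[symmetric])
  finally show ?thesis .
qed

lemma nn_integral_N_square:
  "(\<integral>\<^sup>+ x. ennreal (x\<^sup>2) \<partial>N)
    = ennreal (2 * moment (Suc (Suc j)) / (real (Suc j) * real (Suc (Suc j)) * moment j))"
proof -
  have "(\<integral>\<^sup>+ x. ennreal (x\<^sup>2) \<partial>N) = (\<integral>\<^sup>+ x. ennreal (x\<^sup>2 - 0\<^sup>2) \<partial>N)"
    by simp
  also have "\<dots> = (\<integral>\<^sup>+ t. ennreal (indicator {0..} t * (2 * t)) * emeasure N {t<..} \<partial>lborel)"
    using N.sigma_finite_measure_axioms sets_N AE_N_nonneg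
    by (rule nn_integral_layer_cake) (auto intro!: derivative_eq_intros)
  also have "\<dots>
      = (\<integral>\<^sup>+ t. ennreal (indicator {0..} t * t) * stop_loss f j t * ennreal (2 / moment j) \<partial>lborel)"
  proof (intro nn_integral_cong)
    fix t :: real
    show "ennreal (indicator {0..} t * (2 * t)) * emeasure N {t<..}
        = ennreal (indicator {0..} t * t) * stop_loss f j t * ennreal (2 / moment j)"
    proof (cases "0 \<le> t")
      case True
      have "ennreal (2 * t) * ennreal (1 / moment j) = ennreal t * ennreal (2 / moment j)"
        using True moment_nonneg[of j] by (simp add: ennreal_mult[symmetric])
      with True show ?thesis
        by (simp add: emeasure_N_Ioi mult_ac)
    qed simp
  qed
  also have "\<dots>
      = stop_loss f (Suc (Suc j)) 0 * ennreal (1 / (Suc j * Suc (Suc j))) * ennreal (2 / moment j)"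
    by (simp add: nn_integral_multc nn_integral_mult_stop_loss f_nonneg)
  also have "\<dots> = ennreal (2 * moment (Suc (Suc j)) / (real (Suc j) * real (Suc (Suc j)) * moment j))"
    using moment_pos[of j]
    by (simp add: stop_loss_0_eq_moment moment_nonneg ennreal_mult[symmetric]) (simp add: algebra_simps)
  finally show ?thesis .
qed

lemma variance_N:
  "prob_space.variance N (\<lambda>x. x)
    = (1 / Suc j) * (moment (Suc j) / moment j)
      * ((2 / Suc (Suc j)) * (moment (Suc (Suc j)) / moment (Suc j))
         - (1 / Suc j) * (moment (Suc j) / moment j))"
proof -
  have "integrable N (\<lambda>x. x)"
    using AE_N_nonneg by (intro integrableI_nonneg) (auto simp: nn_integral_N_id)
  moreover have "integrable N (\<lambda>x. x\<^sup>2)"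
    by (intro integrableI_nonneg) (auto simp: nn_integral_N_square)
  ultimately have "prob_space.variance N (\<lambda>x. x) = (LINT x|N. x\<^sup>2) - (LINT x|N. x)\<^sup>2"
    by (rule N.variance_eq)
  also have "\<dots> = 2 * moment (Suc (Suc j)) / (real (Suc j) * real (Suc (Suc j)) * moment j)
      - (moment (Suc j) / (real (Suc j) * moment j))\<^sup>2"
    using AE_N_nonneg moment_nonneg
    by (simp del: of_nat_Suc add: integral_eq_nn_integral nn_integral_N_id nn_integral_N_square)
  also have "\<dots> = (1 / Suc j) * (moment (Suc j) / moment j)
      * ((2 / Suc (Suc j)) * (moment (Suc (Suc j)) / moment (Suc j))
         - (1 / Suc j) * (moment (Suc j) / moment j))"
  proof -
    have "2 * A2 / (S * T * A0) - (A1 / (S * A0))\<^sup>2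
        = (1 / S) * (A1 / A0) * ((2 / T) * (A2 / A1) - (1 / S) * (A1 / A0))"
      if "0 < A0" "0 < A1" "0 < S" "0 < T" for A0 A1 A2 S T :: real
      using that by (simp add: field_simps power2_eq_square)
    then show ?thesis
      using moment_pos[of j] moment_pos[of "Suc j"] by (simp del: of_nat_Suc)
  qed
  finally show ?thesis .
qed

end

lemma stop_loss_0_eq_nn_integral_power:
  assumes "distributed M lborel X (\<lambda>x. ennreal (f x))" and "\<And>x. 0 \<le> f x"
    and "\<And>\<omega>. \<omega> \<in> space M \<Longrightarrow> 0 \<le> X \<omega>"
  shows "stop_loss f k 0 = (\<integral>\<^sup>+ \<omega>. ennreal (X \<omega> ^ k) \<partial>M)"
proof -
  have "stop_loss f k 0 = (\<integral>\<^sup>+ y. ennreal (f y) * ennreal (trunc_pow k 0 y) \<partial>lborel)"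
    unfolding stop_loss_def using assms(2) by (simp add: ennreal_mult)
  also have "\<dots> = (\<integral>\<^sup>+ \<omega>. ennreal (trunc_pow k 0 (X \<omega>)) \<partial>M)"
    using assms(1) by (rule distributed_nn_integral) (simp add: trunc_pow_def)
  also have "\<dots> = (\<integral>\<^sup>+ \<omega>. ennreal (X \<omega> ^ k) \<partial>M)"
    using assms(3) by (intro nn_integral_cong) (simp add: trunc_pow_def)
  finally show ?thesis .
qed

lemma nn_integral_power_pos:
  fixes X :: "'a \<Rightarrow> real" and f :: "real \<Rightarrow> real"
  assumes "prob_space M" and distr: "distributed M lborel X (\<lambda>x. ennreal (f x))"
    and X_nonneg: "\<And>\<omega>. \<omega> \<in> space M \<Longrightarrow> 0 \<le> X \<omega>"
  shows "0 < (\<integral>\<^sup>+ \<omega>. ennreal (X \<omega> ^ k) \<partial>M)"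
proof (rule ccontr)
  interpret M: prob_space M by fact
  have [measurable]: "X \<in> borel_measurable M"
    using distributed_measurable[OF distr] by simp
  assume "\<not> 0 < (\<integral>\<^sup>+ \<omega>. ennreal (X \<omega> ^ k) \<partial>M)"
  then have "AE \<omega> in M. ennreal (X \<omega> ^ k) = 0"
    by (simp add: nn_integral_0_iff_AE)
  then have "AE \<omega> in M. \<omega> \<in> X -` {0} \<inter> space M"
    using AE_space
  proof eventually_elim
    case (elim \<omega>)
    then have "X \<omega> ^ k = 0"
      using X_nonneg[of \<omega>] by (simp add: order_antisym)
    with elim show ?case
      by simp
  qed
  then have "emeasure M (X -` {0} \<inter> space M) = 1"
    by (intro M.emeasure_eq_1_AE) measurable
  moreover have "emeasure M (X -` {0} \<inter> space M) = (\<integral>\<^sup>+ x. ennreal (f x) * indicator {0} x \<partial>lborel)"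
    using distr by (rule distributed_emeasure) simp
  moreover have "(\<integral>\<^sup>+ x. ennreal (f x) * indicator {0} x \<partial>lborel) = (\<integral>\<^sup>+ (x::real). 0 \<partial>lborel)"
    using AE_lborel_singleton[of 0] by (intro nn_integral_cong_AE) auto
  ultimately show False
    by simp
qed

lemma integrable_power_le:
  fixes X :: "'a \<Rightarrow> real"
  assumes "finite_measure M" and [measurable]: "X \<in> borel_measurable M"
    and X_nonneg: "\<And>\<omega>. \<omega> \<in> space M \<Longrightarrow> 0 \<le> X \<omega>"
    and "integrable M (\<lambda>\<omega>. X \<omega> ^ n)" and "k \<le> n"
  shows "integrable M (\<lambda>\<omega>. X \<omega> ^ k)"
proof (rule Bochner_Integration.integrable_bound)
  show "integrable M (\<lambda>\<omega>. 1 + X \<omega> ^ n)"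
    using assms(1,4) by (simp add: finite_measure.integrable_const)
  show "AE \<omega> in M. norm (X \<omega> ^ k) \<le> norm (1 + X \<omega> ^ n)"
  proof (rule AE_I2)
    fix \<omega> assume "\<omega> \<in> space M"
    then have "0 \<le> X \<omega>" by (rule X_nonneg)
    moreover have "X \<omega> ^ k \<le> 1 + X \<omega> ^ n"
    proof (cases "X \<omega> \<le> 1")
      case True
      then have "X \<omega> ^ k \<le> 1" using \<open>0 \<le> X \<omega>\<close> by (simp add: power_le_one)
      then show ?thesis using \<open>0 \<le> X \<omega>\<close> by (simp add: add_increasing2)
    next
      case False
      then have "X \<omega> ^ k \<le> X \<omega> ^ n" using \<open>k \<le> n\<close> by (intro power_increasing) auto
      then show ?thesis by simp
    qed
    ultimately show "norm (X \<omega> ^ k) \<le> norm (1 + X \<omega> ^ n)"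
      by simp
  qed
qed measurable

lemma stop_loss_0_eq_integral_power:
  fixes X :: "'a \<Rightarrow> real" and f :: "real \<Rightarrow> real"
  assumes "prob_space M" and distr: "distributed M lborel X (\<lambda>x. ennreal (f x))"
    and "\<And>x. 0 \<le> f x" and "\<And>\<omega>. \<omega> \<in> space M \<Longrightarrow> 0 \<le> X \<omega>"
    and "integrable M (\<lambda>\<omega>. X \<omega> ^ n)" and "k \<le> n"
  shows "stop_loss f k 0 = ennreal (LINT \<omega>|M. X \<omega> ^ k)" and "0 < (LINT \<omega>|M. X \<omega> ^ k)"
proof -
  interpret M: prob_space M by fact
  have nn_integral: "stop_loss f k 0 = (\<integral>\<^sup>+ \<omega>. ennreal (X \<omega> ^ k) \<partial>M)"
    using distr assms(3,4) by (rule stop_loss_0_eq_nn_integral_power)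
  have "X \<in> borel_measurable M"
    using distributed_measurable[OF distr] by simp
  with M.finite_measure_axioms have "integrable M (\<lambda>\<omega>. X \<omega> ^ k)"
    using assms(4-6) by (rule integrable_power_le)
  then have "(\<integral>\<^sup>+ \<omega>. ennreal (X \<omega> ^ k) \<partial>M) = ennreal (LINT \<omega>|M. X \<omega> ^ k)"
    using assms(4) by (intro nn_integral_eq_integral AE_I2) auto
  then show integral: "stop_loss f k 0 = ennreal (LINT \<omega>|M. X \<omega> ^ k)"
    unfolding nn_integral .
  have "0 < stop_loss f k 0"
    unfolding nn_integral using assms(1) distr assms(4) by (rule nn_integral_power_pos)
  then show "0 < (LINT \<omega>|M. X \<omega> ^ k)"
    by (simp add: integral)
qed

theorem corollary1:
  fixes M :: "'a measure" and X :: "'a \<Rightarrow> real" and f :: "real \<Rightarrow> real"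
    and s :: nat and N :: "real measure"
  assumes "prob_space M"
    and "f \<in> borel_measurable lborel"
    and "\<And>x. f x \<ge> 0"
    and "distributed M lborel X (\<lambda>x. ennreal (f x))"
    and "\<And>\<omega>. \<omega> \<in> space M \<Longrightarrow> X \<omega> \<ge> 0"
    and "s \<ge> 1"
    and "integrable M (\<lambda>\<omega>. X \<omega> ^ (s + 1))"
    \<comment> \<open>N is the s-iterated distribution induced by X: a probability distribution
        on [0,oo) whose tail is T_{X,s}\<close>
    and "prob_space N" and "sets N = sets borel"
    and "measure N {..<0} = 0"
    and "\<And>x. x \<ge> 0 \<Longrightarrow> measure N {x<..} = iter_tail f s x"
  shows "prob_space.variance N (\<lambda>x. x) =
    (1 / real s) * ((LINT \<omega>|M. X \<omega> ^ s) / (LINT \<omega>|M. X \<omega> ^ (s - 1))) *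
    ((2 / real (s + 1)) * ((LINT \<omega>|M. X \<omega> ^ (s + 1)) / (LINT \<omega>|M. X \<omega> ^ s))
     - (1 / real s) * ((LINT \<omega>|M. X \<omega> ^ s) / (LINT \<omega>|M. X \<omega> ^ (s - 1))))"
proof -
  have moment_X: "stop_loss f k 0 = ennreal (LINT \<omega>|M. X \<omega> ^ k)" "0 < (LINT \<omega>|M. X \<omega> ^ k)"
    if "k \<le> s + 1" for k
    using stop_loss_0_eq_integral_power[OF assms(1,4,3,5,7) that] by auto
  obtain j where s: "s = Suc j"
    using \<open>s \<ge> 1\<close> by (cases s) auto
  have "iterated_distribution f j N"
  proof (rule iterated_distribution.intro)
    show "stop_loss f 0 0 = 1"
      using moment_X(1)[of 0] assms(1) by (simp add: prob_space.prob_space)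
    show "0 < stop_loss f k 0" if "k \<le> Suc j" for k
      using moment_X[of k] that s by simp
    show "stop_loss f k 0 < \<infinity>" if "k \<le> Suc (Suc j)" for k
      using moment_X[of k] that s by simp
    show "measure N {x<..} = iter_tail f (Suc j) x" if "0 \<le> x" for x
      using assms(11) that s by simp
  qed (fact assms)+
  then interpret iterated_distribution f j N .
  have "moment k = (LINT \<omega>|M. X \<omega> ^ k)" if "k \<le> s + 1" for k
    using moment_X[OF that] by (simp add: moment_def)
  then show ?thesis
    using variance_N s by simp
qed

end
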